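(* Let $a>3$ be irrational and $t$ a positive integer, and let $U$, $D$ be as follows: $U = \#\{(x,y)\in\mathbb{Z}^2 : x \ge 0,\ x + a y \ge t(a+3)/12,\ x + 3y \le t/2\}$ and $D = \#\{(x,y)\in\mathbb{Z}^2 : y \ge 0,\ x + 3y \ge t/2,\ x + a y \le t(a+3)/12\}$. Let $d(t) = \lceil t/12\rceil$ if $t$ is even and $d(t)=0$ if $t$ is odd. Then \[ L_{\mathcal{T}_{\frac{a+3}{12},\,\frac{a+3}{12a}}}(t) = L_{\mathcal{T}_{1/2,\,1/6}}(t) + D - U - d(t). \]
   Context: For $u,v>0$, $\mathcal{T}_{u,v}$ denotes the closed triangle with vertices $(0,0)$, $(u,0)$, $(0,v)$, and its Ehrhart function is $L_{\mathcal{T}_{u,v}}(t) = \#\left(\mathbb{Z}^2 \cap \mathcal{T}_{tu,tv}\right)$ for positive integers $t$. Here $d(t)$ equals the number of lattice points on the segment of the line $2x+6y=t$ with $0\le y<t/12$. *)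

theory Defs
  imports Complex_Main
begin

definition triangle :: "real \<Rightarrow> real \<Rightarrow> (real \<times> real) set" where
  "triangle u v = {(x, y). x \<ge> 0 \<and> y \<ge> 0 \<and> v * x + u * y \<le> u * v}"

definition ehrhart_triangle :: "real \<Rightarrow> real \<Rightarrow> nat \<Rightarrow> nat" where
  "ehrhart_triangle u v t =
     card {p :: int \<times> int. (real_of_int (fst p), real_of_int (snd p)) \<in> triangle (real t * u) (real t * v)}"

end

theory Submission
  imports Defs
begin

text \<open>Both dilated triangles are cut out of the quadrant by lines through the point (t/4, t/12):
the hypotenuses x + 3y = t/2 and x + ay = t(a+3)/12. The second triangle arises from the first
by adding the wedge D between the two lines (where y \<le> t/12) and removing the wedge U (where
y \<ge> t/12); this inclusion-exclusion over-counts the lattice points on the common boundaries,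
namely the segment of x + 3y = t/2 bounding D and the points of x + ay = t(a+3)/12 bounding U.
As a is irrational, the only lattice point that can lie on the latter line is (t/4, t/12),
the endpoint of the segment, so the correction is the number d(t) of lattice points on the
half-open segment.\<close>

definition lattice_triangle :: "real \<Rightarrow> real \<Rightarrow> (int \<times> int) set" where
  "lattice_triangle b c =
     {(x, y). 0 \<le> x \<and> 0 \<le> y \<and> real_of_int x + b * real_of_int y \<le> c}"

lemma ehrhart_triangle_eq_card_lattice_triangle:
  assumes "u > 0" "v > 0" "t > 0"
  shows "ehrhart_triangle u v t = card (lattice_triangle (u / v) (real t * u))"
proof -
  have "real t * v * X + real t * u * Y \<le> real t * u * (real t * v)
        \<longleftrightarrow> X + u / v * Y \<le> real t * u" for X Y
  proof -
    have "real t * v * X + real t * u * Y = (real t * v) * (X + u / v * Y)"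
      using assms(2) by (simp add: field_simps)
    moreover have "real t * u * (real t * v) = (real t * v) * (real t * u)" by simp
    moreover have "real t * v > 0" using assms by simp
    ultimately show ?thesis by (simp only: mult_le_cancel_left_pos)
  qed
  then show ?thesis
    unfolding ehrhart_triangle_def triangle_def lattice_triangle_def
    by (intro arg_cong[where f = card]) auto
qed

lemma finite_lattice_triangle:
  assumes "b > 0"
  shows "finite (lattice_triangle b c)"
proof (rule finite_subset)
  show "lattice_triangle b c \<subseteq> {0..\<lceil>c\<rceil>} \<times> {0..\<lceil>c / b\<rceil>}"
  proof
    fix z
    assume "z \<in> lattice_triangle b c"
    then obtain x y where z: "z = (x, y)" "0 \<le> x" "0 \<le> y"
      and below: "real_of_int x + b * real_of_int y \<le> c"
      unfolding lattice_triangle_def by auto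
    with assms have "real_of_int x \<le> c" "real_of_int y \<le> c / b"
      by (auto simp: field_simps intro: order.trans[rotated])
    with z show "z \<in> {0..\<lceil>c\<rceil>} \<times> {0..\<lceil>c / b\<rceil>}"
      by (auto simp: le_ceiling_iff)
  qed
qed simp

lemma card_exchange:
  assumes "finite A" "finite B" "D \<subseteq> A" "A - B \<subseteq> D" "U \<subseteq> B" "B - A \<subseteq> U"
  shows "int (card A) + int (card (D \<inter> B))
         = int (card B) + int (card D) - int (card U) + int (card (U \<inter> A))"
proof -
  have "finite D" "finite U" using assms finite_subset by blast+
  moreover have "A - B = D - B" "B - A = U - A" using assms by auto
  moreover have "B \<inter> A = A \<inter> B" by auto
  ultimately show ?thesis
    using assms(1,2) card_Int_Diff[of A B] card_Int_Diff[of B A]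
      card_Int_Diff[of D B] card_Int_Diff[of U A]
    by simp
qed

lemma crossing_lines_diff:
  fixes a b c h p q x y :: real
  assumes "h = p + b * q" "c = p + a * q"
  shows "(x + a * y - c) - (x + b * y - h) = (a - b) * (y - q)"
  using assms by (simp add: algebra_simps)

lemma irrational_combination_eq:
  assumes "a \<notin> \<rat>" "x \<in> \<rat>" "y \<in> \<rat>" "p \<in> \<rat>" "q \<in> \<rat>" "x + a * y = p + a * q"
  shows "x = p \<and> y = q"
proof (cases "y = q")
  case False
  then have "a = (p - x) / (y - q)" using assms(6) by (simp add: field_simps)
  also have "\<dots> \<in> \<rat>" using assms(2-5) by simp
  finally show ?thesis using assms(1) by simp
qed (use assms(6) in simp)

theorem card_lattice_triangle_exchange:
  fixes a b c h p q :: real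
  assumes "0 < b" "b < a" "a \<notin> \<rat>" "p \<in> \<rat>" "q \<in> \<rat>" "0 \<le> p" "0 \<le> q"
    and h: "h = p + b * q" and c: "c = p + a * q"
  shows "int (card (lattice_triangle a c))
         = int (card (lattice_triangle b h))
           + int (card {(x :: int, y :: int). y \<ge> 0 \<and>
                   real_of_int x + b * real_of_int y \<ge> h \<and> real_of_int x + a * real_of_int y \<le> c})
           - int (card {(x :: int, y :: int). x \<ge> 0 \<and>
                   real_of_int x + a * real_of_int y \<ge> c \<and> real_of_int x + b * real_of_int y \<le> h})
           - int (card {(x :: int, y :: int). 0 \<le> y \<and> real_of_int y < q \<and>
                   real_of_int x + b * real_of_int y = h})"
    (is "_ = _ + int (card ?D) - int (card ?U) - int (card ?S)")
proof -
  define A B where "A = lattice_triangle a c" and "B = lattice_triangle b h"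
  define P where "P = {(x :: int, y :: int). real_of_int x = p \<and> real_of_int y = q}"
  have "x + b * y \<ge> h \<Longrightarrow> x + a * y \<le> c \<Longrightarrow> y \<le> q"
    and "x + b * y \<le> h \<Longrightarrow> x + a * y \<ge> c \<Longrightarrow> q \<le> y" for x y :: real
    using crossing_lines_diff[OF h c, of x y] assms(2)
    by (smt (verit) mult_le_0_iff zero_le_mult_iff)+
  then have y_below: "real_of_int x + b * real_of_int y \<ge> h \<Longrightarrow>
                       real_of_int x + a * real_of_int y \<le> c \<Longrightarrow> real_of_int y \<le> q"
    and y_above: "real_of_int x + b * real_of_int y \<le> h \<Longrightarrow>
                       real_of_int x + a * real_of_int y \<ge> c \<Longrightarrow> q \<le> real_of_int y"
    for x y :: int by blast+
  have "finite A" "finite B"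
    unfolding A_def B_def using finite_lattice_triangle assms(1,2) by simp_all
  moreover have D_sub: "?D \<subseteq> A"
  proof (rule subrelI)
    fix x y :: int
    assume "(x, y) \<in> ?D"
    then have "y \<ge> 0" "real_of_int x + b * real_of_int y \<ge> h"
      and "real_of_int x + a * real_of_int y \<le> c"
      by auto
    moreover from this have "b * real_of_int y \<le> b * q" using y_below assms(1) by simp
    ultimately show "(x, y) \<in> A" unfolding A_def lattice_triangle_def using h \<open>0 \<le> p\<close> by auto
  qed
  moreover have "A - B \<subseteq> ?D" unfolding A_def B_def lattice_triangle_def by auto
  moreover have "?U \<subseteq> B"
    unfolding B_def lattice_triangle_def using y_above \<open>0 \<le> q\<close> by fastforce
  moreover have "B - A \<subseteq> ?U" unfolding A_def B_def lattice_triangle_def by auto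
  ultimately have exchange: "int (card A) + int (card (?D \<inter> B))
      = int (card B) + int (card ?D) - int (card ?U) + int (card (?U \<inter> A))"
    by (rule card_exchange)
  have U_cap_A: "?U \<inter> A = P"
  proof
    show "?U \<inter> A \<subseteq> P"
    proof (rule subrelI)
      fix x y :: int
      assume "(x, y) \<in> ?U \<inter> A"
      then have "real_of_int x + a * real_of_int y = p + a * q"
        unfolding A_def lattice_triangle_def c by auto
      with irrational_combination_eq[OF assms(3) Rats_of_int Rats_of_int assms(4,5)]
      show "(x, y) \<in> P" unfolding P_def by simp
    qed
    show "P \<subseteq> ?U \<inter> A"
    proof (rule subrelI)
      fix x y :: int
      assume "(x, y) \<in> P"
      then have "real_of_int x = p" "real_of_int y = q" unfolding P_def by auto
      with assms(6,7) h c show "(x, y) \<in> ?U \<inter> A"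
        unfolding A_def lattice_triangle_def by simp
    qed
  qed
  have D_cap_B: "?D \<inter> B = ?S \<union> P"
  proof
    show "?D \<inter> B \<subseteq> ?S \<union> P"
    proof (rule subrelI)
      fix x y :: int
      assume "(x, y) \<in> ?D \<inter> B"
      moreover from this have "real_of_int y \<le> q" using y_below by auto
      ultimately show "(x, y) \<in> ?S \<union> P"
        unfolding B_def lattice_triangle_def P_def using h by auto
    qed
    show "?S \<union> P \<subseteq> ?D \<inter> B"
    proof (rule subrelI)
      fix x y :: int
      assume "(x, y) \<in> ?S \<union> P"
      then have "0 \<le> real_of_int y" "real_of_int y \<le> q" "real_of_int x + b * real_of_int y = h"
        unfolding P_def using h assms(7) by auto
      moreover from this have "b * real_of_int y \<le> b * q"
        and "a * real_of_int y - b * real_of_int y \<le> a * q - b * q"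
        using assms(1,2) by (simp_all add: mult_right_mono flip: left_diff_distrib)
      ultimately show "(x, y) \<in> ?D \<inter> B"
        unfolding B_def lattice_triangle_def using h c \<open>0 \<le> p\<close> by auto
    qed
  qed
  have "?S \<union> P \<subseteq> A" unfolding D_cap_B[symmetric] using D_sub by (rule le_infI1)
  then have "finite (?S \<union> P)" using \<open>finite A\<close> by (rule finite_subset)
  moreover have "?S \<inter> P = {}" unfolding P_def by auto
  ultimately show ?thesis
    using exchange card_Un_disjoint[of ?S P] U_cap_A D_cap_B unfolding A_def B_def by simp
qed

lemma card_half_open_segment:
  "int (card {(x :: int, y :: int). 0 \<le> y \<and> real_of_int y < real t / 12 \<and>
                real_of_int x + 3 * real_of_int y = real t / 2})
   = (if even t then \<lceil>real t / 12\<rceil> else 0)"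
proof (cases "even t")
  case True
  then obtain m where t: "t = 2 * m" by blast
  have "real_of_int x + 3 * real_of_int y = real t / 2 \<longleftrightarrow> x = int m - 3 * y" for x y :: int
  proof -
    have "real_of_int x + 3 * real_of_int y = real t / 2
          \<longleftrightarrow> real_of_int (x + 3 * y) = real_of_int (int m)"
      using t by simp
    then show ?thesis by (simp only: of_int_eq_iff) linarith
  qed
  then have "{(x :: int, y :: int). 0 \<le> y \<and> real_of_int y < real t / 12 \<and>
                real_of_int x + 3 * real_of_int y = real t / 2}
             = (\<lambda>y. (int m - 3 * y, y)) ` {0..<\<lceil>real t / 12\<rceil>}"
    by (auto simp: less_ceiling_iff)
  moreover have "inj (\<lambda>y :: int. (int m - 3 * y, y))" by (auto intro: injI)
  ultimately show ?thesis using True by (simp add: card_image inj_on_subset[of _ UNIV])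
next
  case False
  have "real_of_int x + 3 * real_of_int y \<noteq> real t / 2" for x y :: int
  proof
    assume "real_of_int x + 3 * real_of_int y = real t / 2"
    then have "real_of_int (2 * x + 6 * y) = real_of_int (int t)" by simp
    then have "int t = 2 * (x + 3 * y)" unfolding of_int_eq_iff by simp
    with False show False by presburger
  qed
  with False show ?thesis by simp
qed

theorem mainTheorem14:
  fixes a :: real and t :: nat
  assumes "a > 3" and "a \<notin> \<rat>" and "t > 0"
  defines "U \<equiv> card {(x :: int, y :: int). x \<ge> 0 \<and>
                 real_of_int x + a * real_of_int y \<ge> real t * (a + 3) / 12 \<and>
                 real_of_int x + 3 * real_of_int y \<le> real t / 2}"
      and "D \<equiv> card {(x :: int, y :: int). y \<ge> 0 \<and>
                 real_of_int x + 3 * real_of_int y \<ge> real t / 2 \<and>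
                 real_of_int x + a * real_of_int y \<le> real t * (a + 3) / 12}"
      and "d \<equiv> (if even t then \<lceil>real t / 12\<rceil> else 0)"
  shows "int (ehrhart_triangle ((a + 3) / 12) ((a + 3) / (12 * a)) t)
         = int (ehrhart_triangle (1 / 2) (1 / 6) t) + int D - int U - d"
proof -
  have "ehrhart_triangle ((a + 3) / 12) ((a + 3) / (12 * a)) t
        = card (lattice_triangle a (real t * (a + 3) / 12))"
    using ehrhart_triangle_eq_card_lattice_triangle[of "(a + 3) / 12" "(a + 3) / (12 * a)" t]
      assms(1,3)
    by simp
  moreover have "ehrhart_triangle (1 / 2) (1 / 6) t = card (lattice_triangle 3 (real t / 2))"
    using ehrhart_triangle_eq_card_lattice_triangle[of "1 / 2" "1 / 6" t] assms(3) by simp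
  moreover have "int (card (lattice_triangle a (real t * (a + 3) / 12)))
      = int (card (lattice_triangle 3 (real t / 2))) + int D - int U
        - int (card {(x :: int, y :: int). 0 \<le> y \<and> real_of_int y < real t / 12 \<and>
                real_of_int x + 3 * real_of_int y = real t / 2})"
    unfolding D_def U_def
    by (rule card_lattice_triangle_exchange[where p = "real t / 4"])
      (use assms(1,2) in \<open>auto simp: algebra_simps\<close>)
  ultimately show ?thesis unfolding d_def card_half_open_segment by simp
qed

end
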